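(* Let $d>0$, $\gamma_1>0$, $\gamma_2,\ldots,\gamma_k\ge0$, $a_i=\sqrt{\gamma_i}$, $\mathbf{a}_l=[a_1,\ldots,a_l,0,\ldots,0]^T\in\mathbb{R}^k$, and let $\mathbf{x}=[x_1,\ldots,x_k]^T$ have i.i.d. real standard Gaussian entries. For $1\le l\le k$ define $P_{l:k}(d)=\Pr\{\mathbf{a}_h^T\mathbf{x}>\tfrac12 d\|\mathbf{a}_h\|^2\ \text{for all } h=l,\ldots,k\}$. Then for every $l<k$, $P_{l:k}(d)\ge\tfrac12 P_{l+1:k}(d)$.
   Context: $\gamma_l$ is the SNR of HARQ round $l$; $P_{l:k}(d)$ is the probability that a pairwise error between codewords at Euclidean distance $d$ occurs after each of the rounds $l,\ldots,k$ under maximum-ratio combining. *)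

theory Defs
  imports "HOL-Probability.Probability"
begin

definition gauss_vec :: "nat \<Rightarrow> (nat \<Rightarrow> real) measure" where
  "gauss_vec k = PiM {1..k} (\<lambda>_. density lborel std_normal_density)"

definition aTx :: "(nat \<Rightarrow> real) \<Rightarrow> nat \<Rightarrow> (nat \<Rightarrow> real) \<Rightarrow> real" where
  "aTx g h x = (\<Sum>i=1..h. sqrt (g i) * x i)"

definition anorm2 :: "(nat \<Rightarrow> real) \<Rightarrow> nat \<Rightarrow> real" where
  "anorm2 g h = (\<Sum>i=1..h. (sqrt (g i))^2)"

definition P_lk :: "(nat \<Rightarrow> real) \<Rightarrow> nat \<Rightarrow> nat \<Rightarrow> real \<Rightarrow> real" where
  "P_lk g k l d = measure (gauss_vec k)
     {x \<in> space (gauss_vec k). \<forall>h\<in>{l..k}. aTx g h x > d / 2 * anorm2 g h}"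

end

theory Submission
  imports Defs
begin

text \<open>
  Put U = a_l^T x, T = x_(l+1), a = \<surd>\<gamma>_(l+1) and \<sigma>^2 = \<parallel>a_l\<parallel>^2, so that U \<sim> N(0, \<sigma>^2) is
  independent of T and of the tail x_(l+2), ..., x_k. Given the tail, the event of P_(l+1:k) says
  that Z = U + a T lies in a set S \<subseteq> (\<theta>, \<infinity>) with \<theta> = d (\<sigma>^2 + a^2) / 2, and the event of P_(l:k)
  adds U > t0 = d \<sigma>^2 / 2. Conditionally on Z = z, U is Gaussian with mean \<sigma>^2 z / (\<sigma>^2 + a^2) > t0,
  so U \<le> t0 is at most as likely as U > t0. Integrating over z \<in> S and over the tail gives
  P_(l+1:k) - P_(l:k) \<le> P_(l:k).
\<close>

definition gauss_sum_prob :: "real \<Rightarrow> real \<Rightarrow> real set \<Rightarrow> real set \<Rightarrow> ennreal" where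
  "gauss_sum_prob \<sigma> a S C =
    (\<integral>\<^sup>+t. ennreal (std_normal_density t) *
       (\<integral>\<^sup>+u. ennreal (normal_density 0 \<sigma> u) * indicator S (u + a * t) * indicator C u \<partial>lborel) \<partial>lborel)"

text \<open>For fixed z, t \<mapsto> \<phi>(t) \<phi>_\<sigma>(z - a t) is proportional to the conditional density of T
  given U + a T = z, a Gaussian centred at m.\<close>
lemma std_normal_density_mult_normal_density_reflect:
  fixes \<sigma> a z t :: real
  assumes "\<sigma> > 0"
  defines "m \<equiv> a * z / (\<sigma>\<^sup>2 + a\<^sup>2)"
  shows "std_normal_density (2 * m - t) * normal_density 0 \<sigma> (z - a * (2 * m - t))
       = std_normal_density t * normal_density 0 \<sigma> (z - a * t)"
proof -
  have "\<sigma>\<^sup>2 + a\<^sup>2 > 0"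
    using assms by (simp add: add_pos_nonneg)
  then have m: "a * z = m * (\<sigma>\<^sup>2 + a\<^sup>2)"
    unfolding m_def by simp
  have "\<sigma>\<^sup>2 * (2 * m - t)\<^sup>2 + (z - a * (2 * m - t))\<^sup>2 - (\<sigma>\<^sup>2 * t\<^sup>2 + (z - a * t)\<^sup>2)
      = 4 * (t - m) * (a * z - m * (\<sigma>\<^sup>2 + a\<^sup>2))"
    by (simp add: algebra_simps power2_eq_square)
  with m have quad: "\<sigma>\<^sup>2 * (2 * m - t)\<^sup>2 + (z - a * (2 * m - t))\<^sup>2 = \<sigma>\<^sup>2 * t\<^sup>2 + (z - a * t)\<^sup>2"
    by simp
  have exponent: "- (s\<^sup>2 / 2) - (z - a * s)\<^sup>2 / (2 * \<sigma>\<^sup>2) = - (\<sigma>\<^sup>2 * s\<^sup>2 + (z - a * s)\<^sup>2) / (2 * \<sigma>\<^sup>2)"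
    for s
    using assms by (simp add: field_simps)
  show ?thesis
    unfolding std_normal_density_def normal_density_def
    using exponent[of t] exponent[of "2 * m - t"] quad
    by (simp add: mult_exp_exp algebra_simps)
qed

lemma nn_integral_conditional_below_le_above:
  fixes \<sigma> a z t\<^sub>0 :: real
  assumes "\<sigma> > 0" and mean: "t\<^sub>0 < \<sigma>\<^sup>2 / (\<sigma>\<^sup>2 + a\<^sup>2) * z"
  shows "(\<integral>\<^sup>+t. ennreal (std_normal_density t * normal_density 0 \<sigma> (z - a * t)) * indicator {..t\<^sub>0} (z - a * t) \<partial>lborel)
       \<le> (\<integral>\<^sup>+t. ennreal (std_normal_density t * normal_density 0 \<sigma> (z - a * t)) * indicator {t\<^sub>0<..} (z - a * t) \<partial>lborel)"
proof -
  define m where "m = a * z / (\<sigma>\<^sup>2 + a\<^sup>2)"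
  let ?K = "\<lambda>t. std_normal_density t * normal_density 0 \<sigma> (z - a * t)"
  have "\<sigma>\<^sup>2 + a\<^sup>2 \<noteq> 0"
    using assms by (simp add: add_pos_nonneg)
  then have "z - a * m = \<sigma>\<^sup>2 / (\<sigma>\<^sup>2 + a\<^sup>2) * z"
    unfolding m_def by (simp add: field_simps power2_eq_square)
  with mean have reflect_above: "t\<^sub>0 < z - a * t" if "z - a * (2 * m - t) \<le> t\<^sub>0" for t
    using that by (simp add: algebra_simps)
  have "(\<integral>\<^sup>+t. ennreal (?K t) * indicator {..t\<^sub>0} (z - a * t) \<partial>lborel)
      = (\<integral>\<^sup>+t. ennreal (?K (2 * m - t)) * indicator {..t\<^sub>0} (z - a * (2 * m - t)) \<partial>lborel)"
    using nn_integral_real_affine[of "\<lambda>t. ennreal (?K t) * indicator {..t\<^sub>0} (z - a * t)" "-1" "2 * m"]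
    by simp
  also have "\<dots> = (\<integral>\<^sup>+t. ennreal (?K t) * indicator {..t\<^sub>0} (z - a * (2 * m - t)) \<partial>lborel)"
    using std_normal_density_mult_normal_density_reflect[OF \<open>\<sigma> > 0\<close>, of a z] by (simp add: m_def)
  also have "\<dots> \<le> (\<integral>\<^sup>+t. ennreal (?K t) * indicator {t\<^sub>0<..} (z - a * t) \<partial>lborel)"
    using reflect_above by (intro nn_integral_mono) (auto simp: indicator_def)
  finally show ?thesis .
qed

lemma gauss_sum_prob_eq_nn_integral_conditional:
  assumes [measurable]: "S \<in> sets borel" "C \<in> sets borel"
  shows "gauss_sum_prob \<sigma> a S C =
    (\<integral>\<^sup>+z. indicator S z *
       (\<integral>\<^sup>+t. ennreal (std_normal_density t * normal_density 0 \<sigma> (z - a * t)) * indicator C (z - a * t) \<partial>lborel) \<partial>lborel)"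
    (is "_ = ?rhs")
proof -
  let ?f = "\<lambda>z t. indicator S z *
    (ennreal (std_normal_density t * normal_density 0 \<sigma> (z - a * t)) * indicator C (z - a * t))"
  have "gauss_sum_prob \<sigma> a S C = (\<integral>\<^sup>+t. (\<integral>\<^sup>+z. ?f z t \<partial>lborel) \<partial>lborel)"
    unfolding gauss_sum_prob_def
  proof (intro nn_integral_cong)
    fix t
    have "(\<integral>\<^sup>+u. ennreal (normal_density 0 \<sigma> u) * indicator S (u + a * t) * indicator C u \<partial>lborel)
        = (\<integral>\<^sup>+z. ennreal (normal_density 0 \<sigma> (z - a * t)) * indicator S z * indicator C (z - a * t) \<partial>lborel)"
      using nn_integral_real_affine[of "\<lambda>u. ennreal (normal_density 0 \<sigma> u) * indicator S (u + a * t) * indicator C u"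
          1 "- (a * t)"]
      by simp
    then show "ennreal (std_normal_density t) *
        (\<integral>\<^sup>+u. ennreal (normal_density 0 \<sigma> u) * indicator S (u + a * t) * indicator C u \<partial>lborel)
      = (\<integral>\<^sup>+z. ?f z t \<partial>lborel)"
      by (simp add: nn_integral_cmult[symmetric] ennreal_mult' mult_ac)
  qed
  also have "\<dots> = (\<integral>\<^sup>+z. (\<integral>\<^sup>+t. ?f z t \<partial>lborel) \<partial>lborel)"
    by (rule lborel_pair.Fubini') measurable
  also have "\<dots> = ?rhs"
    by (intro nn_integral_cong nn_integral_cmult) measurable
  finally show ?thesis .
qed

lemma gauss_sum_prob_below_le_above:
  assumes "\<sigma> > 0" and [measurable]: "S \<in> sets borel"
    and mean: "\<And>z. z \<in> S \<Longrightarrow> t\<^sub>0 < \<sigma>\<^sup>2 / (\<sigma>\<^sup>2 + a\<^sup>2) * z"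
  shows "gauss_sum_prob \<sigma> a S {..t\<^sub>0} \<le> gauss_sum_prob \<sigma> a S {t\<^sub>0<..}"
  unfolding gauss_sum_prob_eq_nn_integral_conditional[OF \<open>S \<in> sets borel\<close> atMost_borel]
    gauss_sum_prob_eq_nn_integral_conditional[OF \<open>S \<in> sets borel\<close> greaterThan_borel]
  using nn_integral_conditional_below_le_above[OF \<open>\<sigma> > 0\<close> mean]
  by (intro nn_integral_mono) (auto simp: indicator_def)

abbreviation std_gauss :: "real measure" where
  "std_gauss \<equiv> density lborel std_normal_density"

lemma prob_space_std_gauss: "prob_space std_gauss"
  by (rule prob_space_normal_density) simp

lemma prob_space_PiM_std_gauss: "prob_space (PiM I (\<lambda>_. std_gauss))"
  by (rule prob_space_PiM) (rule prob_space_std_gauss)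

lemma indep_vars_PiM_std_gauss_coordinates:
  assumes "I \<noteq> {}"
  shows "prob_space.indep_vars (PiM I (\<lambda>_. std_gauss)) (\<lambda>_. borel) (\<lambda>i x. x i) I"
proof -
  let ?M = "PiM I (\<lambda>_. std_gauss)"
  interpret prob_space ?M
    by (rule prob_space_PiM_std_gauss)
  have "distr ?M (PiM I (\<lambda>_. borel)) (\<lambda>x. \<lambda>i\<in>I. x i) = distr ?M ?M (\<lambda>x. x)"
    by (rule distr_cong)
      (auto simp: space_PiM PiE_def extensional_def restrict_def intro!: sets_PiM_cong ext)
  also have "\<dots> = PiM I (\<lambda>i. distr ?M borel (\<lambda>x. x i))"
  proof (simp, rule PiM_cong)
    fix i assume "i \<in> I"
    have "distr ?M borel (\<lambda>x. x i) = distr ?M std_gauss (\<lambda>x. x i)"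
      by (rule distr_cong) auto
    also have "\<dots> = std_gauss"
      using distr_PiM_component[OF prob_space_std_gauss \<open>i \<in> I\<close>] .
    finally show "std_gauss = distr ?M borel (\<lambda>x. x i)" ..
  qed simp
  finally show ?thesis
    using assms by (subst indep_vars_iff_distr_eq_PiM') auto
qed

lemma distributed_PiM_std_gauss_coordinate:
  assumes "i \<in> I"
  shows "distributed (PiM I (\<lambda>_. std_gauss)) lborel (\<lambda>x. x i) std_normal_density"
  unfolding distributed_def
proof (intro conjI)
  have "distr (PiM I (\<lambda>_. std_gauss)) lborel (\<lambda>x. x i) = distr (PiM I (\<lambda>_. std_gauss)) std_gauss (\<lambda>x. x i)"
    by (rule distr_cong) auto
  also have "\<dots> = std_gauss"
    using distr_PiM_component[OF prob_space_std_gauss assms] .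
  finally show "distr (PiM I (\<lambda>_. std_gauss)) lborel (\<lambda>x. x i) = density lborel std_normal_density" .
qed (use assms in auto)

lemma anorm2_pos:
  assumes "1 \<le> l" "g 1 > 0"
  shows "anorm2 g l > 0"
proof -
  have "(sqrt (g 1))\<^sup>2 \<le> anorm2 g l"
    unfolding anorm2_def using assms by (intro member_le_sum) auto
  moreover have "(sqrt (g 1))\<^sup>2 > 0"
    using assms by simp
  ultimately show ?thesis
    by linarith
qed

text \<open>\<open>sum_indep_normal\<close> needs positive standard deviations, so coordinates of weight zero are dropped first.\<close>
lemma distributed_aTx:
  assumes "1 \<le> l" "g 1 > 0" "\<forall>i\<in>{2..l}. g i \<ge> 0"
  shows "distributed (PiM {1..l} (\<lambda>_. std_gauss)) lborel (aTx g l) (normal_density 0 (sqrt (anorm2 g l)))"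
proof -
  let ?M = "PiM {1..l} (\<lambda>_. std_gauss)"
  interpret prob_space ?M
    by (rule prob_space_PiM_std_gauss)
  define K where "K = {i\<in>{1..l}. g i > 0}"
  have K: "finite K" "K \<noteq> {}" "K \<subseteq> {1..l}"
    using assms unfolding K_def by auto
  have zero: "g i = 0" if "i \<in> {1..l} - K" for i
  proof -
    have "i \<in> {2..l}"
      using that assms(2) unfolding K_def by (cases "i = 1") auto
    with that assms(3) have "g i \<ge> 0" "\<not> g i > 0"
      unfolding K_def by auto
    then show ?thesis
      by linarith
  qed
  have "indep_vars (\<lambda>_. borel) (\<lambda>i x. x i) K"
    by (rule indep_vars_subset[OF indep_vars_PiM_std_gauss_coordinates K(3)]) (use assms in auto)
  then have indep: "indep_vars (\<lambda>_. borel) (\<lambda>i x. sqrt (g i) * x i) K"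
    by (rule indep_vars_compose2) auto
  have normal: "distributed ?M lborel (\<lambda>x. sqrt (g i) * x i) (normal_density 0 (sqrt (g i)))"
    if "i \<in> K" for i
  proof -
    have "distributed ?M lborel (\<lambda>x. 0 + sqrt (g i) * x i)
        (normal_density (0 + sqrt (g i) * 0) (\<bar>sqrt (g i)\<bar> * 1))"
      by (rule normal_density_affine[OF distributed_PiM_std_gauss_coordinate])
        (use that K(3) in \<open>auto simp: K_def\<close>)
    with that show ?thesis
      by (simp add: K_def)
  qed
  have "distributed ?M lborel (\<lambda>x. \<Sum>i\<in>K. sqrt (g i) * x i)
      (normal_density (\<Sum>i\<in>K. 0) (sqrt (\<Sum>i\<in>K. (sqrt (g i))\<^sup>2)))"
    by (rule sum_indep_normal[OF K(1,2) indep _ normal]) (simp add: K_def)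
  moreover have "(\<lambda>x. \<Sum>i\<in>K. sqrt (g i) * x i) = aTx g l"
    unfolding aTx_def using K zero by (intro ext sum.mono_neutral_left) auto
  moreover have "(\<Sum>i\<in>K. (sqrt (g i))\<^sup>2) = anorm2 g l"
    unfolding anorm2_def using K zero by (intro sum.mono_neutral_left) auto
  ultimately show ?thesis
    by simp
qed

lemma prob_space_gauss_vec: "prob_space (gauss_vec k)"
  unfolding gauss_vec_def by (rule prob_space_PiM_std_gauss)

lemma aTx_Suc: "aTx g (l + 1) x = aTx g l x + sqrt (g (l + 1)) * x (l + 1)"
  unfolding aTx_def by simp

lemma aTx_add:
  assumes "l \<le> h"
  shows "aTx g h x = aTx g l x + (\<Sum>i=l+1..h. sqrt (g i) * x i)"
proof -
  have "{1..h} = {1..l} \<union> {l+1..h}"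
    using assms by auto
  then show ?thesis
    unfolding aTx_def by (simp add: sum.union_disjoint)
qed

lemma anorm2_Suc: "anorm2 g (Suc l) = anorm2 g l + (sqrt (g (Suc l)))\<^sup>2"
  unfolding anorm2_def by simp

lemma measurable_aTx [measurable]:
  assumes "h \<le> k"
  shows "aTx g h \<in> borel_measurable (gauss_vec k)"
  unfolding aTx_def gauss_vec_def
proof (rule borel_measurable_sum)
  fix i assume "i \<in> {1..h}"
  with assms have "i \<in> {1..k}"
    by auto
  then show "(\<lambda>x. sqrt (g i) * x i) \<in> borel_measurable (PiM {1..k} (\<lambda>_. std_gauss))"
    by measurable
qed

lemma emeasure_gauss_vec_eq_nn_integral_gauss_sum_prob:
  fixes S :: "(nat \<Rightarrow> real) \<Rightarrow> real set"
  assumes "1 \<le> l" "l < k" "g 1 > 0" "\<forall>i\<in>{2..l}. g i \<ge> 0"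
    and S_cong: "\<And>x x'. (\<forall>i\<in>{l+2..k}. x i = x' i) \<Longrightarrow> S x = S x'"
    and [measurable]: "\<And>x. S x \<in> sets borel" "C \<in> sets borel" "E \<in> sets (gauss_vec k)"
    and E_iff: "\<And>x. x \<in> space (gauss_vec k) \<Longrightarrow> x \<in> E \<longleftrightarrow> aTx g (l + 1) x \<in> S x \<and> aTx g l x \<in> C"
  shows "emeasure (gauss_vec k) E =
    (\<integral>\<^sup>+w. gauss_sum_prob (sqrt (anorm2 g l)) (sqrt (g (l + 1))) (S w) C \<partial>PiM {l+2..k} (\<lambda>_. std_gauss))"
proof -
  interpret product_sigma_finite "\<lambda>_::nat. std_gauss"
    by (simp add: product_sigma_finite_def prob_space_imp_sigma_finite prob_space_std_gauss)
  let ?i = "l + 1" and ?J = "{l+2..k}" and ?I = "{1..l}"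
  let ?a = "sqrt (g (l + 1))"
  interpret sigma_finite_measure "PiM ?I (\<lambda>_. std_gauss)"
    by (rule prob_space_imp_sigma_finite[OF prob_space_PiM_std_gauss])
  have k: "{1..k} = insert ?i ?J \<union> ?I"
    using assms by auto
  have E [measurable]: "E \<in> sets (PiM (insert ?i ?J \<union> ?I) (\<lambda>_. std_gauss))"
    using assms k by (simp add: gauss_vec_def)
  have merge: "indicator E (merge (insert ?i ?J) ?I (w(?i := t), y))
      = indicator (S w) (aTx g l y + ?a * t) * (indicator C (aTx g l y) :: ennreal)"
    if w: "w \<in> space (PiM ?J (\<lambda>_. std_gauss))" and y: "y \<in> space (PiM ?I (\<lambda>_. std_gauss))" for w t y
  proof -
    define p where "p = merge (insert ?i ?J) ?I (w(?i := t), y)"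
    have "w(?i := t) \<in> space (PiM (insert ?i ?J) (\<lambda>_. std_gauss))"
      by (rule measurable_space[OF measurable_component_update[OF w]]) auto
    then have "p \<in> space (PiM (insert ?i ?J \<union> ?I) (\<lambda>_. std_gauss))"
      unfolding p_def using y by (intro measurable_space[OF measurable_merge]) (simp add: space_pair_measure)
    then have "p \<in> space (gauss_vec k)"
      using k by (simp add: gauss_vec_def)
    moreover have "aTx g l p = aTx g l y"
      unfolding aTx_def p_def merge_def by (intro sum.cong) auto
    moreover have "p ?i = t"
      unfolding p_def merge_def by simp
    moreover have "S p = S w"
      by (rule S_cong) (auto simp: p_def merge_def)
    ultimately show ?thesis
      using E_iff[of p] unfolding p_def aTx_Suc by (simp add: indicator_def)
  qed
  have "emeasure (gauss_vec k) E = (\<integral>\<^sup>+x. indicator E x \<partial>PiM (insert ?i ?J \<union> ?I) (\<lambda>_. std_gauss))"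
    unfolding gauss_vec_def k using E by (rule nn_integral_indicator[symmetric])
  also have "\<dots> = (\<integral>\<^sup>+x. (\<integral>\<^sup>+y. indicator E (merge (insert ?i ?J) ?I (x, y)) \<partial>PiM ?I (\<lambda>_. std_gauss))
      \<partial>PiM (insert ?i ?J) (\<lambda>_. std_gauss))"
    by (rule product_nn_integral_fold) measurable
  also have "\<dots> = (\<integral>\<^sup>+w. (\<integral>\<^sup>+t. (\<integral>\<^sup>+y. indicator E (merge (insert ?i ?J) ?I (w(?i := t), y))
      \<partial>PiM ?I (\<lambda>_. std_gauss)) \<partial>std_gauss) \<partial>PiM ?J (\<lambda>_. std_gauss))"
    by (rule product_nn_integral_insert) measurable
  also have "\<dots> = (\<integral>\<^sup>+w. (\<integral>\<^sup>+t. (\<integral>\<^sup>+u. ennreal (normal_density 0 (sqrt (anorm2 g l)) u) *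
      (indicator (S w) (u + ?a * t) * indicator C u) \<partial>lborel) \<partial>std_gauss) \<partial>PiM ?J (\<lambda>_. std_gauss))"
  proof (intro nn_integral_cong)
    fix w t assume w: "w \<in> space (PiM ?J (\<lambda>_. std_gauss))"
    have "(\<integral>\<^sup>+y. indicator E (merge (insert ?i ?J) ?I (w(?i := t), y)) \<partial>PiM ?I (\<lambda>_. std_gauss))
        = (\<integral>\<^sup>+y. indicator (S w) (aTx g l y + ?a * t) * indicator C (aTx g l y) \<partial>PiM ?I (\<lambda>_. std_gauss))"
      by (rule nn_integral_cong) (rule merge[OF w])
    also have "\<dots> = (\<integral>\<^sup>+u. ennreal (normal_density 0 (sqrt (anorm2 g l)) u) *
        (indicator (S w) (u + ?a * t) * indicator C u) \<partial>lborel)"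
      by (rule distributed_nn_integral[OF distributed_aTx[OF assms(1,3,4)], symmetric]) measurable
    finally show "(\<integral>\<^sup>+y. indicator E (merge (insert ?i ?J) ?I (w(?i := t), y)) \<partial>PiM ?I (\<lambda>_. std_gauss))
        = (\<integral>\<^sup>+u. ennreal (normal_density 0 (sqrt (anorm2 g l)) u) *
        (indicator (S w) (u + ?a * t) * indicator C u) \<partial>lborel)" .
  qed
  also have "\<dots> = (\<integral>\<^sup>+w. gauss_sum_prob (sqrt (anorm2 g l)) ?a (S w) C \<partial>PiM ?J (\<lambda>_. std_gauss))"
    unfolding gauss_sum_prob_def mult.assoc by (intro nn_integral_cong nn_integral_density) measurable
  finally show ?thesis .
qed

definition threshold_event :: "(nat \<Rightarrow> real) \<Rightarrow> nat \<Rightarrow> nat \<Rightarrow> real \<Rightarrow> (nat \<Rightarrow> real) set" where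
  "threshold_event g k l d = {x \<in> space (gauss_vec k). \<forall>h\<in>{l..k}. aTx g h x > d / 2 * anorm2 g h}"

text \<open>The values of a_(l+1)^T x for which the constraints h = l+1, ..., k hold, given x_(l+2), ..., x_k.\<close>
definition tail_threshold_set :: "(nat \<Rightarrow> real) \<Rightarrow> nat \<Rightarrow> nat \<Rightarrow> real \<Rightarrow> (nat \<Rightarrow> real) \<Rightarrow> real set" where
  "tail_threshold_set g k l d x =
    {z. \<forall>h\<in>{l+1..k}. z + (\<Sum>i=l+2..h. sqrt (g i) * x i) > d / 2 * anorm2 g h}"

lemma P_lk_eq_measure_threshold_event: "P_lk g k l d = measure (gauss_vec k) (threshold_event g k l d)"
  unfolding P_lk_def threshold_event_def ..

lemma sets_threshold_event [measurable]: "threshold_event g k l d \<in> sets (gauss_vec k)"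
  unfolding threshold_event_def by (rule sets.sets_Collect_finite_All) auto

lemma threshold_event_iff:
  assumes "l < k"
  shows "x \<in> threshold_event g k l d \<longleftrightarrow>
    x \<in> threshold_event g k (l + 1) d \<and> aTx g l x > d / 2 * anorm2 g l"
proof -
  have "{l..k} = insert l {l+1..k}"
    using assms by auto
  then show ?thesis
    unfolding threshold_event_def by auto
qed

lemma threshold_event_Suc_iff:
  assumes "l < k"
  shows "x \<in> threshold_event g k (l + 1) d \<longleftrightarrow>
    x \<in> space (gauss_vec k) \<and> aTx g (l + 1) x \<in> tail_threshold_set g k l d x"
proof -
  have "aTx g h x > d / 2 * anorm2 g h \<longleftrightarrow>
      aTx g (l + 1) x + (\<Sum>i=l+2..h. sqrt (g i) * x i) > d / 2 * anorm2 g h" if "h \<in> {l+1..k}" for h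
    using aTx_add[of "l + 1" h] that by simp
  then show ?thesis
    unfolding threshold_event_def tail_threshold_set_def by auto
qed

lemma sets_tail_threshold_set: "tail_threshold_set g k l d x \<in> sets borel"
proof -
  have "tail_threshold_set g k l d x =
      {z \<in> space borel. \<forall>h\<in>{l+1..k}. d / 2 * anorm2 g h < z + (\<Sum>i=l+2..h. sqrt (g i) * x i)}"
    unfolding tail_threshold_set_def by auto
  also have "\<dots> \<in> sets borel"
    by (rule sets.sets_Collect_finite_All) auto
  finally show ?thesis .
qed

lemma tail_threshold_set_cong:
  assumes "\<forall>i\<in>{l+2..k}. x i = x' i"
  shows "tail_threshold_set g k l d x = tail_threshold_set g k l d x'"
proof -
  have "(\<Sum>i=l+2..h. sqrt (g i) * x i) = (\<Sum>i=l+2..h. sqrt (g i) * x' i)" if "h \<le> k" for h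
    using assms that by (intro sum.cong) auto
  then show ?thesis
    unfolding tail_threshold_set_def by auto
qed

text \<open>The conditional mean of U given U + a T = z (with a^2 = \<gamma>_(l+1)) exceeds the threshold of P_(l:k).\<close>
lemma tail_threshold_set_conditional_mean_gt:
  assumes "1 \<le> l" "l < k" "g 1 > 0" "z \<in> tail_threshold_set g k l d x"
  shows "d / 2 * anorm2 g l < anorm2 g l / anorm2 g (l + 1) * z"
proof -
  have pos: "anorm2 g l > 0" "anorm2 g (l + 1) > 0"
    using anorm2_pos[of l g] anorm2_pos[of "l + 1" g] assms by auto
  have "d / 2 * anorm2 g (l + 1) < z"
    using assms unfolding tail_threshold_set_def by force
  then have "anorm2 g l / anorm2 g (l + 1) * (d / 2 * anorm2 g (l + 1)) < anorm2 g l / anorm2 g (l + 1) * z"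
    using pos by (intro mult_strict_left_mono) auto
  with pos show ?thesis
    by (simp add: mult.commute)
qed

theorem lemma3:
  fixes g :: "nat \<Rightarrow> real" and d :: real and k l :: nat
  assumes "d > 0" and "g 1 > 0" and "\<forall>i\<in>{2..k}. g i \<ge> 0"
    and "1 \<le> l" and "l < k"
  shows "P_lk g k l d \<ge> 1/2 * P_lk g k (l+1) d"
proof -
  let ?E = "threshold_event g k" and ?S = "tail_threshold_set g k l d"
  let ?\<sigma> = "sqrt (anorm2 g l)" and ?a = "sqrt (g (l + 1))" and ?t = "d / 2 * anorm2 g l"
  let ?W = "PiM {l+2..k} (\<lambda>_. std_gauss)"
  interpret prob_space "gauss_vec k"
    by (rule prob_space_gauss_vec)
  have conditioned: "emeasure (gauss_vec k) E = (\<integral>\<^sup>+w. gauss_sum_prob ?\<sigma> ?a (?S w) C \<partial>?W)"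
    if "E \<in> sets (gauss_vec k)" "C \<in> sets borel"
      and "\<And>x. x \<in> space (gauss_vec k) \<Longrightarrow> x \<in> E \<longleftrightarrow> x \<in> ?E (l + 1) d \<and> aTx g l x \<in> C" for E C
    using assms that
    by (intro emeasure_gauss_vec_eq_nn_integral_gauss_sum_prob tail_threshold_set_cong sets_tail_threshold_set)
      (auto simp: threshold_event_Suc_iff[OF \<open>l < k\<close>, simplified])
  have "emeasure (gauss_vec k) (?E (l + 1) d - ?E l d) = (\<integral>\<^sup>+w. gauss_sum_prob ?\<sigma> ?a (?S w) {..?t} \<partial>?W)"
    by (rule conditioned) (auto simp: threshold_event_iff[OF \<open>l < k\<close>])
  also have "\<dots> \<le> (\<integral>\<^sup>+w. gauss_sum_prob ?\<sigma> ?a (?S w) {?t<..} \<partial>?W)"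
    using tail_threshold_set_conditional_mean_gt[of l k g] anorm2_pos[of l g] assms
    by (intro nn_integral_mono gauss_sum_prob_below_le_above sets_tail_threshold_set) (simp_all add: anorm2_Suc)
  also have "\<dots> = emeasure (gauss_vec k) (?E l d)"
    by (rule conditioned[symmetric]) (auto simp: threshold_event_iff[OF \<open>l < k\<close>])
  finally have "measure (gauss_vec k) (?E (l + 1) d - ?E l d) \<le> measure (gauss_vec k) (?E l d)"
    by (simp add: emeasure_eq_measure)
  moreover have "?E l d \<subseteq> ?E (l + 1) d"
    using threshold_event_iff[OF \<open>l < k\<close>] by blast
  ultimately show ?thesis
    unfolding P_lk_eq_measure_threshold_event by (simp add: finite_measure_Diff)
qed

end
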